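(* Let $G$ be a finite simple graph with at least $66$ vertices and $G\in\mathcal{F}_3$. Then $crx_3(G)>4$; that is, no edge-colouring of $G$ with at most $4$ colours has the property that any three vertices of $G$ lie on a common rainbow cycle.
   Context: An edge-coloured cycle is rainbow if all its edges have distinct colours. For $k\ge 1$, $\mathcal{F}_k$ is the family of graphs in which any $k$ vertices lie on a common cycle. For $G\in\mathcal{F}_k$, a $k$-rainbow cycle colouring of $G$ is an edge-colouring such that any $k$ vertices of $G$ lie on a common rainbow cycle; $crx_k(G)$ is the minimum number of colours in a $k$-rainbow cycle colouring of $G$. *)

theory Defs
  imports Main
begin

definition simple_graph :: "'a set \<Rightarrow> 'a set set \<Rightarrow> bool" where
  "simple_graph V E \<longleftrightarrow> finite V \<and> (\<forall>e\<in>E. e \<subseteq> V \<and> card e = 2)"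

definition is_cycle :: "'a set set \<Rightarrow> 'a list \<Rightarrow> bool" where
  "is_cycle E vs \<longleftrightarrow> distinct vs \<and> length vs \<ge> 3 \<and>
     (\<forall>i < length vs. {vs ! i, vs ! ((i + 1) mod length vs)} \<in> E)"

definition cycle_edges :: "'a list \<Rightarrow> 'a set set" where
  "cycle_edges vs = {{vs ! i, vs ! ((i + 1) mod length vs)} | i. i < length vs}"

definition rainbow_cycle :: "'a set set \<Rightarrow> ('a set \<Rightarrow> 'c) \<Rightarrow> 'a list \<Rightarrow> bool" where
  "rainbow_cycle E c vs \<longleftrightarrow> is_cycle E vs \<and> inj_on c (cycle_edges vs)"

definition in_F :: "nat \<Rightarrow> 'a set \<Rightarrow> 'a set set \<Rightarrow> bool" where
  "in_F k V E \<longleftrightarrow> (\<forall>S. S \<subseteq> V \<and> card S = k \<longrightarrow> (\<exists>vs. is_cycle E vs \<and> S \<subseteq> set vs))"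

definition rainbow_cycle_colouring :: "nat \<Rightarrow> 'a set \<Rightarrow> 'a set set \<Rightarrow> ('a set \<Rightarrow> 'c) \<Rightarrow> bool" where
  "rainbow_cycle_colouring k V E c \<longleftrightarrow>
     (\<forall>S. S \<subseteq> V \<and> card S = k \<longrightarrow> (\<exists>vs. rainbow_cycle E c vs \<and> S \<subseteq> set vs))"

end

theory Submission
  imports Defs
begin

text \<open>A rainbow cycle uses as many colours as it has edges, so with at most four colours every
  rainbow cycle is a triangle or a 4-cycle. Any three vertices of such a cycle span at least two of
  its edges, hence every triple of vertices spans two edges of different colours. This local
  condition bounds the graph: a vertex has at most one non-neighbour, and its neighbours along a
  colour \<open>j\<close> (together with a non-neighbour, if any) only see the remaining colours among
  themselves. Induction on the number of colours gives the bounds 2, 5, 16 and 65 for vertex sets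
  whose edges use at most 1, 2, 3 and 4 colours.\<close>

lemma cycle_edges_image:
  "cycle_edges vs = (\<lambda>i. {vs ! i, vs ! ((i + 1) mod length vs)}) ` {..<length vs}"
  unfolding cycle_edges_def by blast

lemma card_cycle_edges:
  assumes "distinct vs" and "3 \<le> length vs"
  shows "card (cycle_edges vs) = length vs"
proof -
  let ?l = "length vs" and ?succ = "\<lambda>i. (i + 1) mod length vs"
  have nth_inj: "vs ! i = vs ! j \<longleftrightarrow> i = j" if "i < ?l" "j < ?l" for i j
    using assms(1) that by (simp add: nth_eq_iff_index_eq)
  have succ_lt: "?succ i < ?l" for i
    using assms(2) by (intro mod_less_divisor) linarith
  have "inj_on (\<lambda>i. {vs ! i, vs ! ?succ i}) {..<?l}"
  proof (rule inj_onI)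
    fix i j assume "i \<in> {..<?l}" "j \<in> {..<?l}"
      and eq: "{vs ! i, vs ! ?succ i} = {vs ! j, vs ! ?succ j}"
    then have i: "i < ?l" and j: "j < ?l" by simp_all
    show "i = j"
    proof (rule ccontr)
      assume "i \<noteq> j"
      with eq i j have "vs ! i = vs ! ?succ j" "vs ! ?succ i = vs ! j"
        using nth_inj[of i j] by (auto simp: doubleton_eq_iff)
      with i j have i_succ: "i = ?succ j" and j_succ: "j = ?succ i"
        using nth_inj[of i "?succ j"] nth_inj[of "?succ i" j] succ_lt[of i] succ_lt[of j] by metis+
      have "i = ((i + 1) mod ?l + 1) mod ?l"
        using i_succ unfolding j_succ .
      also have "\<dots> = (i + 2) mod ?l"
        by (simp add: mod_Suc_eq)
      finally have "i = (i + 2) mod ?l" .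
      moreover have "(i + 2) mod ?l \<noteq> i"
      proof (cases "i + 2 < ?l")
        case False
        then have "(i + 2) mod ?l = (i + 2 - ?l) mod ?l"
          by (intro le_mod_geq) simp
        also have "\<dots> = i + 2 - ?l"
          using i assms(2) by (intro mod_less) simp
        finally show ?thesis using False assms(2) by linarith
      qed simp
      ultimately show False by simp
    qed
  qed
  then show ?thesis by (simp add: cycle_edges_image card_image)
qed

lemma rainbow_cycle_length_le:
  assumes "rainbow_cycle E c vs" and "finite E"
  shows "length vs \<le> card (c ` E)"
proof -
  have cyc: "is_cycle E vs" and inj: "inj_on c (cycle_edges vs)"
    using assms(1) unfolding rainbow_cycle_def by auto
  have "cycle_edges vs \<subseteq> E"
    using cyc unfolding is_cycle_def cycle_edges_def by blast
  then have "card (c ` cycle_edges vs) \<le> card (c ` E)"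
    using assms(2) by (intro card_mono) auto
  with cyc inj show ?thesis
    by (simp add: card_image card_cycle_edges is_cycle_def)
qed

lemma cycle_edges_triangle: "cycle_edges [a, b, d] = {{a, b}, {b, d}, {d, a}}"
  by (simp add: cycle_edges_image lessThan_nat_numeral lessThan_Suc) blast

lemma cycle_edges_square: "cycle_edges [a, b, d, e] = {{a, b}, {b, d}, {d, e}, {e, a}}"
  by (simp add: cycle_edges_image lessThan_nat_numeral lessThan_Suc) blast

text \<open>Of the three pairs in a triple, at most one is a chord of a 4-cycle, since any two of
  them meet while the two chords are disjoint.\<close>
lemma short_cycle_edges_cover_triple:
  assumes "distinct vs" and "3 \<le> length vs" and "length vs \<le> 4"
    and "x \<in> set vs" "y \<in> set vs" "z \<in> set vs" "x \<noteq> y" "x \<noteq> z" "y \<noteq> z"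
  defines "C \<equiv> cycle_edges vs"
  shows "{x, y} \<in> C \<and> {x, z} \<in> C \<or> {x, y} \<in> C \<and> {y, z} \<in> C \<or> {x, z} \<in> C \<and> {y, z} \<in> C"
proof -
  have "length vs = 3 \<or> length vs = 4" using assms(2,3) by linarith
  then consider a b d where "vs = [a, b, d]" | a b d e where "vs = [a, b, d, e]"
    by (auto simp: numeral_eq_Suc length_Suc_conv)
  then show ?thesis
  proof cases
    case 1
    have "x \<in> {a, b, d}" "y \<in> {a, b, d}" "z \<in> {a, b, d}" "distinct [a, b, d]"
      using 1 assms(1,4-6) by simp_all
    then show ?thesis
      unfolding C_def 1 cycle_edges_triangle
      using assms(7-9) by (elim insertE emptyE; simp add: insert_commute)
  next
    case 2
    have "x \<in> {a, b, d, e}" "y \<in> {a, b, d, e}" "z \<in> {a, b, d, e}" "distinct [a, b, d, e]"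
      using 2 assms(1,4-6) by simp_all
    then show ?thesis
      unfolding C_def 2 cycle_edges_square
      using assms(7-9) by (elim insertE emptyE; simp add: insert_commute)
  qed
qed

definition bichromatic_triple :: "'a set set \<Rightarrow> ('a set \<Rightarrow> 'c) \<Rightarrow> 'a \<Rightarrow> 'a \<Rightarrow> 'a \<Rightarrow> bool" where
  "bichromatic_triple E c x y z \<longleftrightarrow>
     {x, y} \<in> E \<and> {x, z} \<in> E \<and> c {x, y} \<noteq> c {x, z} \<or>
     {x, y} \<in> E \<and> {y, z} \<in> E \<and> c {x, y} \<noteq> c {y, z} \<or>
     {x, z} \<in> E \<and> {y, z} \<in> E \<and> c {x, z} \<noteq> c {y, z}"

lemma bichromatic_triple_if_rainbow_cycle_colouring:
  assumes colouring: "rainbow_cycle_colouring 3 V E c" and "finite E" and "card (c ` E) \<le> 4"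
    and "x \<in> V" "y \<in> V" "z \<in> V" "x \<noteq> y" "x \<noteq> z" "y \<noteq> z"
  shows "bichromatic_triple E c x y z"
proof -
  have "{x, y, z} \<subseteq> V" "card {x, y, z} = 3" using assms(4-9) by auto
  then obtain vs where rainbow: "rainbow_cycle E c vs" and xyz: "{x, y, z} \<subseteq> set vs"
    using colouring[unfolded rainbow_cycle_colouring_def, rule_format, of "{x, y, z}"] by blast
  have cyc: "is_cycle E vs" and inj: "inj_on c (cycle_edges vs)"
    using rainbow unfolding rainbow_cycle_def by auto
  have CE: "cycle_edges vs \<subseteq> E"
    using cyc unfolding is_cycle_def cycle_edges_def by blast
  have "length vs \<le> 4"
    using rainbow_cycle_length_le[OF rainbow \<open>finite E\<close>] \<open>card (c ` E) \<le> 4\<close> by linarith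
  with cyc xyz assms(7-9) have cover:
    "{x, y} \<in> cycle_edges vs \<and> {x, z} \<in> cycle_edges vs \<or>
     {x, y} \<in> cycle_edges vs \<and> {y, z} \<in> cycle_edges vs \<or>
     {x, z} \<in> cycle_edges vs \<and> {y, z} \<in> cycle_edges vs"
    by (intro short_cycle_edges_cover_triple) (auto simp: is_cycle_def)
  have pairs: "{x, y} \<noteq> {x, z}" "{x, y} \<noteq> {y, z}" "{x, z} \<noteq> {y, z}"
    using assms(7-9) by (auto simp: doubleton_eq_iff)
  have edges_differ: "e \<in> cycle_edges vs \<Longrightarrow> e' \<in> cycle_edges vs \<Longrightarrow> e \<noteq> e'
      \<Longrightarrow> e \<in> E \<and> e' \<in> E \<and> c e \<noteq> c e'" for e e'
    using CE inj_on_contraD[OF inj, of e e'] by blast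
  from cover show ?thesis
    unfolding bichromatic_triple_def
    using edges_differ[OF _ _ pairs(1)] edges_differ[OF _ _ pairs(2)] edges_differ[OF _ _ pairs(3)]
    by (elim disjE conjE) simp_all
qed

locale bichromatic_triples =
  fixes V :: "'a set" and E :: "'a set set" and c :: "'a set \<Rightarrow> 'b"
  assumes finite_V: "finite V"
    and bichromatic: "\<And>x y z. \<lbrakk>x \<in> V; y \<in> V; z \<in> V; x \<noteq> y; x \<noteq> z; y \<noteq> z\<rbrakk>
      \<Longrightarrow> bichromatic_triple E c x y z"
begin

lemma adjacent_to_one_of_two:
  assumes "x \<in> V" "y \<in> V" "z \<in> V" "x \<noteq> y" "x \<noteq> z" "y \<noteq> z" "{x, y} \<notin> E"
  shows "{x, z} \<in> E"
  using bichromatic[OF assms(1-6)] assms(7) unfolding bichromatic_triple_def by blast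

lemma equal_colours_force_third_edge:
  assumes "x \<in> V" "y \<in> V" "z \<in> V" "x \<noteq> y" "x \<noteq> z" "y \<noteq> z"
    and "{x, y} \<in> E" "{x, z} \<in> E" "c {x, y} = c {x, z}"
  shows "{y, z} \<in> E \<and> c {y, z} \<noteq> c {x, y}"
  using bichromatic[OF assms(1-6)] assms(9) unfolding bichromatic_triple_def by auto

lemma non_edge_forces_distinct_colours:
  assumes "x \<in> V" "u \<in> V" "y \<in> V" "x \<noteq> u" "x \<noteq> y" "u \<noteq> y" "{x, u} \<notin> E"
  shows "{x, y} \<in> E \<and> {u, y} \<in> E \<and> c {x, y} \<noteq> c {u, y}"
  using bichromatic[OF assms(1-6)] assms(7) unfolding bichromatic_triple_def by blast

definition colours_within :: "'a set \<Rightarrow> 'b set \<Rightarrow> bool" where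
  "colours_within S K \<longleftrightarrow> (\<forall>y \<in> S. \<forall>z \<in> S. y \<noteq> z \<longrightarrow> {y, z} \<in> E \<longrightarrow> c {y, z} \<in> K)"

lemma colours_withinD:
  "colours_within S K \<Longrightarrow> y \<in> S \<Longrightarrow> z \<in> S \<Longrightarrow> y \<noteq> z \<Longrightarrow> {y, z} \<in> E \<Longrightarrow> c {y, z} \<in> K"
  unfolding colours_within_def by blast

definition coloured_nbrs :: "'a \<Rightarrow> 'b \<Rightarrow> 'a set \<Rightarrow> 'a set" where
  "coloured_nbrs x j S = {y \<in> S. y \<noteq> x \<and> {x, y} \<in> E \<and> c {x, y} = j}"

definition non_nbrs :: "'a \<Rightarrow> 'a set \<Rightarrow> 'a set" where
  "non_nbrs x S = {y \<in> S. y \<noteq> x \<and> {x, y} \<notin> E}"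

lemma card_non_nbrs_le_1:
  assumes "x \<in> V" "S \<subseteq> V"
  shows "card (non_nbrs x S) \<le> 1"
proof -
  have "finite (non_nbrs x S)"
    using finite_V assms(2) unfolding non_nbrs_def by (auto intro: finite_subset)
  moreover have "y = z" if "y \<in> non_nbrs x S" "z \<in> non_nbrs x S" for y z
    using that adjacent_to_one_of_two[of x y z] assms unfolding non_nbrs_def by auto
  ultimately show ?thesis
    by (simp add: card_le_Suc0_iff_eq)
qed

lemma colours_within_coloured_nbrs:
  assumes "x \<in> V" "S \<subseteq> V" "colours_within S K"
  shows "colours_within (coloured_nbrs x j S) (K - {j})"
proof -
  have "c {y, z} \<noteq> j" if "y \<in> coloured_nbrs x j S" "z \<in> coloured_nbrs x j S" "y \<noteq> z" for y z
    using that assms(1,2) equal_colours_force_third_edge[of x y z]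
    unfolding coloured_nbrs_def by auto
  with assms(3) show ?thesis
    unfolding colours_within_def coloured_nbrs_def by auto
qed

text \<open>Since \<open>{x, u} \<notin> E\<close>, every edge \<open>{u, y}\<close> differs in colour from \<open>{x, y}\<close>.\<close>
lemma colours_within_insert_non_nbr:
  assumes "x \<in> V" "S \<subseteq> V" "colours_within S K" "u \<in> non_nbrs x S"
  shows "colours_within (insert u (coloured_nbrs x j S)) (K - {j})"
proof -
  have u: "u \<in> S" "u \<noteq> x" "{x, u} \<notin> E" using assms(4) unfolding non_nbrs_def by auto
  have "c {u, y} \<noteq> j" if "y \<in> coloured_nbrs x j S" for y
  proof -
    have y: "y \<in> S" "y \<noteq> x" "{x, y} \<in> E" "c {x, y} = j"
      using that unfolding coloured_nbrs_def by auto
    with u have "u \<noteq> y" by auto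
    moreover have "u \<in> V" "y \<in> V" using u(1) y(1) assms(2) by auto
    ultimately show ?thesis
      using non_edge_forces_distinct_colours[of x u y] u y assms(1) by auto
  qed
  with colours_within_coloured_nbrs[OF assms(1-3), of j] assms(3) u show ?thesis
    unfolding colours_within_def coloured_nbrs_def by (auto simp: insert_commute)
qed

lemma card_le_Suc_non_nbrs_coloured_nbrs:
  assumes "x \<in> S" "S \<subseteq> V" "colours_within S K" "finite K"
  shows "card S \<le> Suc (card (non_nbrs x S) + (\<Sum>j\<in>K. card (coloured_nbrs x j S)))"
proof -
  have "finite S" using assms(2) finite_V finite_subset by blast
  then have fin: "finite (non_nbrs x S)" "finite (\<Union>j\<in>K. coloured_nbrs x j S)"
    using assms(4) unfolding non_nbrs_def coloured_nbrs_def by auto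
  have "S \<subseteq> insert x (non_nbrs x S \<union> (\<Union>j\<in>K. coloured_nbrs x j S))"
  proof
    fix y assume y: "y \<in> S"
    show "y \<in> insert x (non_nbrs x S \<union> (\<Union>j\<in>K. coloured_nbrs x j S))"
    proof (cases "y = x \<or> {x, y} \<notin> E")
      case True
      with y show ?thesis unfolding non_nbrs_def by auto
    next
      case False
      then have "y \<noteq> x" "{x, y} \<in> E" by auto
      with y have "y \<in> coloured_nbrs x (c {x, y}) S" "c {x, y} \<in> K"
        using colours_withinD[OF assms(3,1) y] unfolding coloured_nbrs_def by auto
      then show ?thesis by blast
    qed
  qed
  then have "card S \<le> card (insert x (non_nbrs x S \<union> (\<Union>j\<in>K. coloured_nbrs x j S)))"
    using fin by (intro card_mono) auto
  also have "\<dots> \<le> Suc (card (non_nbrs x S \<union> (\<Union>j\<in>K. coloured_nbrs x j S)))"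
    using fin by (simp add: card_insert_if)
  also have "\<dots> \<le> Suc (card (non_nbrs x S) + card (\<Union>j\<in>K. coloured_nbrs x j S))"
    using card_Un_le by simp
  also have "\<dots> \<le> Suc (card (non_nbrs x S) + (\<Sum>j\<in>K. card (coloured_nbrs x j S)))"
    using card_UN_le[OF assms(4)] by simp
  finally show ?thesis .
qed

lemma card_le_2_if_one_colour:
  assumes "S \<subseteq> V" "colours_within S K" "finite K" "card K \<le> 1"
  shows "card S \<le> 2"
proof (rule ccontr)
  assume "\<not> card S \<le> 2"
  then have "3 \<le> card S" by simp
  then obtain T where "T \<subseteq> S" "card T = 3" by (rule obtain_subset_with_card_n)
  then obtain x y z where xyz: "x \<in> S" "y \<in> S" "z \<in> S" "x \<noteq> y" "x \<noteq> z" "y \<noteq> z"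
    by (auto simp: card_3_iff)
  with assms(1) have "bichromatic_triple E c x y z"
    by (intro bichromatic) auto
  then have "\<exists>a \<in> K. \<exists>b \<in> K. a \<noteq> b"
    unfolding bichromatic_triple_def
    using colours_withinD[OF assms(2)] xyz by (elim disjE conjE; blast)
  with assms(3,4) show False by (auto simp: card_le_Suc0_iff_eq)
qed

text \<open>Counting around a vertex \<open>x\<close>: if \<open>x\<close> is adjacent to all of \<open>S\<close>, each colour class of
  its neighbourhood has at most \<open>b\<close> vertices; otherwise each one has fewer, since the unique
  non-neighbour can be added to it.\<close>
lemma card_le_if_one_more_colour:
  assumes bound: "\<And>S' K'. S' \<subseteq> V \<Longrightarrow> colours_within S' K' \<Longrightarrow> finite K' \<Longrightarrow> card K' \<le> k
      \<Longrightarrow> card S' \<le> b"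
    and S: "S \<subseteq> V" "colours_within S K" "finite K" "card K \<le> Suc k"
  shows "card S \<le> 1 + Suc k * b"
proof (cases "S = {}")
  case False
  then obtain x where x: "x \<in> S" by blast
  with S(1) have xV: "x \<in> V" by blast
  have K_minus: "card (K - {j}) \<le> k" if "j \<in> K" for j
    using that S(3,4) by simp
  have nbrs_sub: "coloured_nbrs x j S \<subseteq> V" for j
    using S(1) unfolding coloured_nbrs_def by blast
  have decomp: "card S \<le> Suc (card (non_nbrs x S) + (\<Sum>j\<in>K. card (coloured_nbrs x j S)))"
    by (rule card_le_Suc_non_nbrs_coloured_nbrs[OF x S(1-3)])
  show ?thesis
  proof (cases "non_nbrs x S = {}")
    case True
    have "card (coloured_nbrs x j S) \<le> b" if "j \<in> K" for j
      using bound[OF nbrs_sub colours_within_coloured_nbrs[OF xV S(1,2)] _ K_minus[OF that]] S(3)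
      by simp
    then have "(\<Sum>j\<in>K. card (coloured_nbrs x j S)) \<le> card K * b"
      using sum_bounded_above[of K _ b] by simp
    also have "\<dots> \<le> Suc k * b" using S(4) by (rule mult_le_mono1)
    finally show ?thesis using decomp True by simp
  next
    case False
    then obtain u where u: "u \<in> non_nbrs x S" by blast
    then have uV: "u \<in> V" and u_notin: "u \<notin> coloured_nbrs x j S" for j
      using S(1) unfolding non_nbrs_def coloured_nbrs_def by auto
    have "card {x} \<le> b"
      by (rule bound[of _ "{}"]) (use xV in \<open>auto simp: colours_within_def\<close>)
    then obtain b' where b: "b = Suc b'" by (cases b) auto
    have "Suc (card (coloured_nbrs x j S)) \<le> b" if "j \<in> K" for j
    proof -
      have "card (insert u (coloured_nbrs x j S)) \<le> b"
        using bound[OF _ colours_within_insert_non_nbr[OF xV S(1,2) u] _ K_minus[OF that]]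
          nbrs_sub uV S(3) by simp
      moreover have "finite (coloured_nbrs x j S)"
        using finite_subset[OF nbrs_sub finite_V] .
      ultimately show ?thesis using u_notin by simp
    qed
    then have "(\<Sum>j\<in>K. card (coloured_nbrs x j S)) \<le> card K * b'"
      using sum_bounded_above[of K _ b'] b by simp
    also have "\<dots> \<le> Suc k * b'" using S(4) by (rule mult_le_mono1)
    finally show ?thesis
      using decomp card_non_nbrs_le_1[OF xV S(1)] b by simp
  qed
qed simp

lemma card_le_65_if_four_colours:
  assumes "S \<subseteq> V" "colours_within S K" "finite K" "card K \<le> 4"
  shows "card S \<le> 65"
proof -
  have two_colours: "card S \<le> 5"
    if "S \<subseteq> V" "colours_within S K" "finite K" "card K \<le> 2" for S K
    using card_le_if_one_more_colour[OF card_le_2_if_one_colour, where k = 1] that by simp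
  have three_colours: "card S \<le> 16"
    if "S \<subseteq> V" "colours_within S K" "finite K" "card K \<le> 3" for S K
    using card_le_if_one_more_colour[OF two_colours, where k = 2] that by simp
  show ?thesis
    using card_le_if_one_more_colour[OF three_colours, where k = 3] assms by simp
qed

end

theorem theorem7:
  fixes V :: "'a set" and E :: "'a set set"
  assumes "simple_graph V E" and "card V \<ge> 66" and "in_F 3 V E"
  shows "\<not> (\<exists>c :: 'a set \<Rightarrow> nat. card (c ` E) \<le> 4 \<and> rainbow_cycle_colouring 3 V E c)"
proof
  assume "\<exists>c :: 'a set \<Rightarrow> nat. card (c ` E) \<le> 4 \<and> rainbow_cycle_colouring 3 V E c"
  then obtain c :: "'a set \<Rightarrow> nat"
    where few_colours: "card (c ` E) \<le> 4" and colouring: "rainbow_cycle_colouring 3 V E c"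
    by blast
  have "finite V" and "E \<subseteq> Pow V"
    using assms(1) unfolding simple_graph_def by auto
  then have "finite E" by (meson finite_Pow_iff finite_subset)
  interpret bichromatic_triples V E c
    using \<open>finite V\<close> bichromatic_triple_if_rainbow_cycle_colouring[OF colouring \<open>finite E\<close> few_colours]
    by unfold_locales
  have "card V \<le> 65"
    using \<open>finite E\<close> few_colours
    by (intro card_le_65_if_four_colours[of V "c ` E"]) (auto simp: colours_within_def)
  with assms(2) show False by simp
qed

end
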